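(* Let $a\geq 2$. For Lebesgue-almost every $x\in\Lambda^{a+1}$ we have $\lim_{k\to\infty}T_{a,1}^k(x)=(0,\ldots,0)$ and $\sigma(x)=\sum_{k=0}^{\infty}x_a^{(k)}$.
   Context: For $n\geq 1$ let $\Lambda^n=\{x\in\mathbb{R}^n : 0\leq x_1\leq\cdots\leq x_n\}$. The map $T_{a,1}:\Lambda^{a+1}\to\Lambda^{a+1}$ sends $x$ to the vector obtained by arranging $x_1,\ldots,x_a,\,x_{a+1}-x_a$ in nondecreasing order. Write $x^{(k)}=T_{a,1}^k(x)$ (so $x^{(0)}=x$) and $x^{(k)}_i$ for its $i$-th coordinate; $\sigma(x)=x_1+\cdots+x_{a+1}$. *)

theory Defs
  imports "HOL-Analysis.Analysis" "HOL-Probability.Probability"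
begin

(* Points of R^n are represented as functions nat => real, coordinate x_i (1-based in
   the paper) being  x (i-1); the relevant coordinates are 0..n-1.  Lebesgue measure on
   R^n is the product measure  PiM {..<n} (\<lambda>_. lborel). *)

definition Lambda :: "nat \<Rightarrow> (nat \<Rightarrow> real) set" where
  "Lambda n = {x. (0 < n \<longrightarrow> 0 \<le> x 0) \<and> (\<forall>i. Suc i < n \<longrightarrow> x i \<le> x (Suc i))}"

definition T :: "nat \<Rightarrow> (nat \<Rightarrow> real) \<Rightarrow> (nat \<Rightarrow> real)" where
  "T a x = (let L = sort (map x [0..<a] @ [x a - x (a - 1)])
            in (\<lambda>i. if i < a + 1 then L ! i else undefined))"

definition sigma :: "nat \<Rightarrow> (nat \<Rightarrow> real) \<Rightarrow> real" where
  "sigma a x = (\<Sum>i<a+1. x i)"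

end

theory Submission
  imports Defs "HOL-Combinatorics.List_Permutation"
begin

text \<open>
  Almost every x has coordinates that are linearly independent over the integers, and T preserves
  this, since it applies a unimodular integer linear map and then permutes coordinates. Each step
  lowers sigma by x_a, so the values x_a^(k) are summable and sigma(x^(k)) decreases to some S >= 0.
  If S > 0, then once x_a^(k) < S/(a+2) the largest coordinate is at least 2 x_a^(k), so
  x_(a+1) - x_a >= x_a and T leaves x_a in place. Then x_a^(k) is eventually constant and, tending
  to 0, eventually 0, contradicting independence. Hence S = 0, which gives both claims.
\<close>

lemma null_sets_PiM_lborel_hyperplane:
  fixes c :: "nat \<Rightarrow> real" and I :: "nat set"
  assumes fin: "finite I" and j: "j \<in> I" and cj: "c j \<noteq> 0"
  shows "{x \<in> space (PiM I (\<lambda>_. lborel)). (\<Sum>i\<in>I. c i * x i) = 0} \<in> null_sets (PiM I (\<lambda>_. lborel))"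
proof -
  interpret product_sigma_finite "\<lambda>_::nat. lborel :: real measure"
    by (simp add: product_sigma_finite_def lborel.sigma_finite_measure_axioms)
  define J where "J = I - {j}"
  have IJ: "I = insert j J" "j \<notin> J" "finite J" using j fin by (auto simp: J_def)
  define H where "H = {x \<in> space (PiM I (\<lambda>_. lborel)). (\<Sum>i\<in>I. c i * x i) = 0}"
  have H_sets[measurable]: "H \<in> sets (PiM I (\<lambda>_. lborel))" unfolding H_def by measurable
  have fibre_null: "(\<integral>\<^sup>+ y. indicator H (x(j := y)) \<partial>lborel) = 0" for x :: "nat \<Rightarrow> real"
  proof -
    define r where "r = (\<Sum>i\<in>J. c i * x i)"
    have "indicator H (x(j := y)) \<le> (indicator {- r / c j} y :: ennreal)" for y
    proof (cases "x(j := y) \<in> H")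
      case True
      then have "c j * y + (\<Sum>i\<in>J. c i * (x(j := y)) i) = 0" using IJ by (simp add: H_def)
      moreover have "(\<Sum>i\<in>J. c i * (x(j := y)) i) = r"
        unfolding r_def by (rule sum.cong) (use IJ in auto)
      ultimately have "y = - r / c j" using cj by (simp add: field_simps)
      then show ?thesis using True by simp
    qed simp
    then have "(\<integral>\<^sup>+ y. indicator H (x(j := y)) \<partial>lborel) \<le> (\<integral>\<^sup>+ y. indicator {- r / c j} y \<partial>lborel)"
      by (intro nn_integral_mono)
    then show ?thesis by simp
  qed
  have "emeasure (PiM I (\<lambda>_. lborel)) H = (\<integral>\<^sup>+ x. indicator H x \<partial>PiM I (\<lambda>_. lborel))"
    by simp
  also have "\<dots> = (\<integral>\<^sup>+ x. (\<integral>\<^sup>+ y. indicator H (x(j := y)) \<partial>lborel) \<partial>PiM J (\<lambda>_. lborel))"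
    unfolding IJ(1) by (rule product_nn_integral_insert) (use IJ H_sets in auto)
  also have "\<dots> = 0" by (simp add: fibre_null)
  finally show ?thesis using H_sets unfolding H_def by (simp add: null_sets_def)
qed

definition int_independent :: "nat \<Rightarrow> (nat \<Rightarrow> real) \<Rightarrow> bool" where
  "int_independent n y \<longleftrightarrow>
     (\<forall>c::nat \<Rightarrow> int. (\<exists>i<n. c i \<noteq> 0) \<longrightarrow> (\<Sum>i<n. of_int (c i) * y i) \<noteq> 0)"

lemma AE_int_independent: "AE y in PiM {..<n} (\<lambda>_. lborel). int_independent n y"
proof -
  let ?M = "PiM {..<n} (\<lambda>_. lborel :: real measure)"
  let ?C = "PiE {..<n} (\<lambda>_. UNIV :: int set)"
  let ?P = "\<lambda>c y. (\<exists>i<n. c i \<noteq> 0) \<longrightarrow> (\<Sum>i<n. of_int (c i) * y i) \<noteq> (0::real)"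
  have "AE y in ?M. ?P c y" for c
  proof (cases "\<exists>i<n. c i \<noteq> 0")
    case True
    then obtain j where "j < n" "c j \<noteq> 0" by auto
    then have "{y \<in> space ?M. (\<Sum>i\<in>{..<n}. real_of_int (c i) * y i) = 0} \<in> null_sets ?M"
      by (intro null_sets_PiM_lborel_hyperplane) auto
    then show ?thesis by (rule AE_I') auto
  qed simp
  then have "AE y in ?M. \<forall>c\<in>?C. ?P c y"
    by (subst AE_ball_countable) (auto intro: countable_PiE)
  then show ?thesis
  proof (rule eventually_mono)
    fix y assume P: "\<forall>c\<in>?C. ?P c y"
    show "int_independent n y" unfolding int_independent_def
    proof (intro allI)
      fix c :: "nat \<Rightarrow> int"
      have "?P (restrict c {..<n}) y" using bspec[OF P, of "restrict c {..<n}"] by simp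
      moreover have "(\<Sum>i<n. of_int (restrict c {..<n} i) * y i) = (\<Sum>i<n. of_int (c i) * y i)"
        by (rule sum.cong) auto
      ultimately show "?P c y" by auto
    qed
  qed
qed

lemma int_independent_nonzero:
  assumes "int_independent n y" and "i < n"
  shows "y i \<noteq> 0"
proof -
  have "(\<Sum>j<n. of_int (if j = i then 1 else 0) * y j) \<noteq> 0"
    using assms unfolding int_independent_def
    by (elim allE[of _ "\<lambda>j. if j = i then 1 else 0"]) auto
  moreover have "(\<Sum>j<n. of_int (if j = i then 1 else 0) * y j) = (\<Sum>j<n. if j = i then y j else 0)"
    by (rule sum.cong) auto
  moreover have "\<dots> = y i" using assms(2) by (simp add: sum.delta)
  ultimately show ?thesis by simp
qed

lemma Lambda_mono:
  assumes "y \<in> Lambda n" "i \<le> j" "j < n"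
  shows "y i \<le> y j"
  using assms(2,3)
proof (induction j)
  case (Suc j)
  show ?case
  proof (cases "i = Suc j")
    case False
    then have "y i \<le> y j" using Suc by simp
    also have "y j \<le> y (Suc j)" using assms(1) Suc.prems by (simp add: Lambda_def)
    finally show ?thesis .
  qed simp
qed simp

lemma Lambda_nonneg:
  assumes "y \<in> Lambda n" "i < n"
  shows "0 \<le> y i"
  using assms Lambda_mono[OF assms(1), of 0 i] by (simp add: Lambda_def)

lemma sigma_nonneg: "y \<in> Lambda (a+1) \<Longrightarrow> 0 \<le> sigma a y"
  unfolding sigma_def by (intro sum_nonneg) (simp add: Lambda_nonneg)

definition T_unsorted :: "nat \<Rightarrow> (nat \<Rightarrow> real) \<Rightarrow> nat \<Rightarrow> real" where
  "T_unsorted a y i = (if i < a then y i else y a - y (a - 1))"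

lemma T_nth:
  assumes "i < a + 1"
  shows "T a y i = sort (map (T_unsorted a y) [0..<a+1]) ! i"
proof -
  have L: "map (T_unsorted a y) [0..<a+1] = map y [0..<a] @ [y a - y (a - 1)]"
    by (simp add: T_unsorted_def map_eq_conv)
  show ?thesis using assms unfolding T_def Let_def L by simp
qed

lemma T_perm:
  obtains p where "bij_betw p {..<a+1} {..<a+1}" and "\<And>i. i < a+1 \<Longrightarrow> T a y i = T_unsorted a y (p i)"
proof -
  let ?L = "map (T_unsorted a y) [0..<a+1]"
  obtain p where p: "bij_betw p {..<a+1} {..<a+1}" "\<forall>i<a+1. sort ?L ! i = ?L ! p i"
    using permutation_Ex_bij[of "sort ?L" ?L] by auto
  have "T a y i = T_unsorted a y (p i)" if "i < a+1" for i
    using p that bij_betwE[OF p(1)] by (simp add: T_nth del: upt_Suc)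
  with p(1) that show ?thesis by blast
qed

lemma T_unsorted_nonneg:
  assumes "y \<in> Lambda (a+1)" "i < a+1"
  shows "0 \<le> T_unsorted a y i"
  using assms Lambda_nonneg[OF assms] Lambda_mono[OF assms(1), of "a - 1" a]
  by (simp add: T_unsorted_def)

lemma sum_T_unsorted:
  fixes e :: "nat \<Rightarrow> real"
  assumes "a \<ge> 1"
  shows "(\<Sum>j<a+1. e j * T_unsorted a y j) = (\<Sum>j<a+1. (e j - (if j = a - 1 then e a else 0)) * y j)"
proof -
  have "(\<Sum>j<a+1. (e j - (if j = a - 1 then e a else 0)) * y j)
      = (\<Sum>j<a+1. e j * y j - (if j = a - 1 then e a * y j else 0))"
    by (intro sum.cong) (auto simp: left_diff_distrib)
  also have "\<dots> = (\<Sum>j<a+1. e j * y j) - e a * y (a - 1)"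
    using assms by (simp add: sum_subtractf)
  finally show ?thesis by (simp add: T_unsorted_def algebra_simps)
qed

lemma T_Lambda:
  assumes y: "y \<in> Lambda (a+1)"
  shows "T a y \<in> Lambda (a+1)"
proof -
  let ?S = "sort (map (T_unsorted a y) [0..<a+1])"
  obtain p where p: "bij_betw p {..<a+1} {..<a+1}" "\<And>i. i < a+1 \<Longrightarrow> T a y i = T_unsorted a y (p i)"
    using T_perm[of a y] by blast
  have "0 \<le> T a y 0"
    using p bij_betwE[OF p(1)] T_unsorted_nonneg[OF y, of "p 0"] by simp
  moreover have "T a y i \<le> T a y (Suc i)" if "Suc i < a + 1" for i
    using sorted_nth_mono[of ?S i "Suc i"] that by (simp add: T_nth del: upt_Suc)
  ultimately show ?thesis by (simp add: Lambda_def)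
qed

lemma sigma_T: "sigma a (T a y) = sigma a y - y (a - 1)"
proof -
  obtain p where p: "bij_betw p {..<a+1} {..<a+1}" "\<And>i. i < a+1 \<Longrightarrow> T a y i = T_unsorted a y (p i)"
    using T_perm[of a y] by blast
  have "sigma a (T a y) = (\<Sum>i<a+1. T_unsorted a y (p i))"
    by (simp add: sigma_def p(2) del: upt_Suc)
  also have "\<dots> = (\<Sum>j<a+1. T_unsorted a y j)"
    by (rule sum.reindex_bij_betw[OF p(1)])
  also have "\<dots> = sigma a y - y (a - 1)"
    by (simp add: sigma_def T_unsorted_def)
  finally show ?thesis .
qed

lemma int_independent_T:
  assumes ind: "int_independent (a+1) y" and a: "a \<ge> 1"
  shows "int_independent (a+1) (T a y)"
  unfolding int_independent_def
proof (intro allI impI)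
  fix c :: "nat \<Rightarrow> int"
  assume "\<exists>i<a+1. c i \<noteq> 0"
  then obtain i where i: "i < a+1" "c i \<noteq> 0" by auto
  obtain p where p: "bij_betw p {..<a+1} {..<a+1}" "\<And>i. i < a+1 \<Longrightarrow> T a y i = T_unsorted a y (p i)"
    using T_perm[of a y] by blast
  define d where "d j = c (inv_into {..<a+1} p j)" for j
  define d' where "d' j = d j - (if j = a - 1 then d a else 0)" for j
  have d_p: "d (p i) = c i" if "i < a+1" for i
    using p(1) that by (simp add: d_def bij_betw_inv_into_left)
  have "(\<Sum>i<a+1. of_int (c i) * T a y i) = (\<Sum>i<a+1. of_int (d (p i)) * T_unsorted a y (p i))"
    by (rule sum.cong) (simp_all add: p(2) d_p)
  also have "\<dots> = (\<Sum>j<a+1. of_int (d j) * T_unsorted a y j)"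
    by (rule sum.reindex_bij_betw[OF p(1)])
  also have "\<dots> = (\<Sum>j<a+1. of_int (d' j) * y j)"
    unfolding d'_def by (subst sum_T_unsorted[OF a]) (auto intro: sum.cong)
  finally have sum_eq: "(\<Sum>i<a+1. of_int (c i) * T a y i) = (\<Sum>j<a+1. of_int (d' j) * y j)" .
  have "\<exists>j<a+1. d' j \<noteq> 0"
  proof (cases "d a = 0")
    case True
    then have "d' (p i) \<noteq> 0" using i d_p by (simp add: d'_def)
    then show ?thesis using bij_betwE[OF p(1)] i(1) by blast
  next
    case False
    then have "d' a \<noteq> 0" using a by (simp add: d'_def)
    then show ?thesis by (intro exI[of _ a]) simp
  qed
  then show "(\<Sum>i<a+1. of_int (c i) * T a y i) \<noteq> 0"
    using ind sum_eq unfolding int_independent_def by metis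
qed

text \<open>
  The paper's x_a is coordinate a - 1 here. When it is small compared with sigma, the last
  coordinate is at least twice it, so the list that T sorts is already sorted.
\<close>

lemma T_fixes_penultimate:
  assumes y: "y \<in> Lambda (a+1)" and a: "a \<ge> 1" and small: "(real a + 2) * y (a - 1) \<le> sigma a y"
  shows "T a y (a - 1) = y (a - 1)"
proof -
  have "(\<Sum>i<a. y i) \<le> of_nat (card {..<a}) * y (a - 1)"
    by (rule sum_bounded_above) (use Lambda_mono[OF y] in auto)
  moreover have "sigma a y = (\<Sum>i<a. y i) + y a" by (simp add: sigma_def)
  ultimately have big: "y (a - 1) \<le> y a - y (a - 1)"
    using small by (simp add: algebra_simps)
  have below: "y i \<le> y (a - 1)" if "i < a" for i
    using Lambda_mono[OF y, of i "a - 1"] that by simp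
  have "T_unsorted a y i \<le> T_unsorted a y j" if "i \<le> j" "j < a+1" for i j
    using that big below[of i] Lambda_mono[OF y, of i j] by (auto simp: T_unsorted_def)
  then have "sorted (map (T_unsorted a y) [0..<a+1])"
    unfolding sorted_iff_nth_mono by (simp del: upt_Suc)
  then show ?thesis
    using a by (simp add: T_nth sorted_sort_id T_unsorted_def del: upt_Suc)
qed

lemma sigma_T_iter:
  "sigma a ((T a ^^ k) x) = sigma a x - (\<Sum>j<k. (T a ^^ j) x (a - 1))"
  by (induction k) (simp_all add: sigma_T)

lemma Lambda_T_iter: "x \<in> Lambda (a+1) \<Longrightarrow> (T a ^^ k) x \<in> Lambda (a+1)"
  using T_Lambda by (induction k) simp_all

lemma int_independent_T_iter:
  "int_independent (a+1) x \<Longrightarrow> a \<ge> 1 \<Longrightarrow> int_independent (a+1) ((T a ^^ k) x)"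
  using int_independent_T by (induction k) simp_all

lemma T_iter_penultimate_not_tendsto_zero:
  assumes a: "a \<ge> 1" and x: "x \<in> Lambda (a+1)" and ind: "int_independent (a+1) x"
    and S: "0 < S" "\<And>k. S \<le> sigma a ((T a ^^ k) x)"
  shows "\<not> (\<lambda>k. (T a ^^ k) x (a - 1)) \<longlonglongrightarrow> 0"
proof
  define t where "t k = (T a ^^ k) x (a - 1)" for k
  assume "(\<lambda>k. (T a ^^ k) x (a - 1)) \<longlonglongrightarrow> 0"
  then have t_lim: "t \<longlonglongrightarrow> 0" by (simp add: t_def[abs_def])
  have "0 < S / (real a + 2)" using S(1) by simp
  then obtain N where N: "\<And>k. k \<ge> N \<Longrightarrow> t k < S / (real a + 2)"
    using order_tendstoD(2)[OF t_lim] by (auto simp: eventually_sequentially)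
  have "t (Suc k) = t k" if "k \<ge> N" for k
  proof -
    have "(real a + 2) * t k \<le> sigma a ((T a ^^ k) x)"
      using N[OF that] S(2)[of k] by (simp add: field_simps)
    then show ?thesis
      using T_fixes_penultimate[OF Lambda_T_iter[OF x] a] by (simp add: t_def)
  qed
  then have "t (k + N) = t N" for k by (induction k) simp_all
  then have "(\<lambda>_. t N) \<longlonglongrightarrow> 0" using LIMSEQ_ignore_initial_segment[OF t_lim, of N] by simp
  moreover have "t N \<noteq> 0"
    using int_independent_nonzero[OF int_independent_T_iter[OF ind a], of "a - 1"] by (simp add: t_def)
  ultimately show False by (simp add: LIMSEQ_const_iff)
qed

lemma T_iterates_tendsto_zero:
  assumes a: "a \<ge> 1" and x: "x \<in> Lambda (a+1)" and ind: "int_independent (a+1) x"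
  shows "(\<forall>i<a+1. (\<lambda>k. ((T a ^^ k) x) i) \<longlonglongrightarrow> 0) \<and>
         (\<lambda>k. ((T a ^^ k) x) (a - 1)) sums sigma a x"
proof -
  define y where "y k = (T a ^^ k) x" for k
  define t where "t k = y k (a - 1)" for k
  have y_Lambda: "y k \<in> Lambda (a+1)" for k
    unfolding y_def using x by (rule Lambda_T_iter)
  have sigma_y: "sigma a (y k) = sigma a x - (\<Sum>j<k. t j)" for k
    by (simp add: y_def t_def sigma_T_iter)
  have t_nonneg: "0 \<le> t k" for k
    using Lambda_nonneg[OF y_Lambda, of "a - 1"] by (simp add: t_def)
  have "(\<Sum>j<k. t j) \<le> sigma a x" for k
    using sigma_nonneg[OF y_Lambda, of k] by (simp add: sigma_y)
  then have t_summable: "summable t"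
    by (intro summableI_nonneg_bounded[where x = "sigma a x"]) (auto simp: t_nonneg)
  define S where "S = sigma a x - suminf t"
  have sigma_lim: "(\<lambda>k. sigma a (y k)) \<longlonglongrightarrow> S"
    unfolding sigma_y S_def by (intro tendsto_intros summable_LIMSEQ t_summable)
  have "S = 0"
  proof (rule ccontr)
    assume "S \<noteq> 0"
    moreover have "0 \<le> S"
      using sigma_lim by (rule LIMSEQ_le_const) (use sigma_nonneg y_Lambda in blast)
    moreover have "S \<le> sigma a (y k)" for k
      using sum_le_suminf[OF t_summable, of "{..<k}"] t_nonneg by (simp add: sigma_y S_def)
    ultimately have "\<not> t \<longlonglongrightarrow> 0"
      using T_iter_penultimate_not_tendsto_zero[OF a x ind, of S]
      by (simp add: y_def t_def[abs_def])
    then show False using summable_LIMSEQ_zero[OF t_summable] by contradiction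
  qed
  have "(\<lambda>k. y k i) \<longlonglongrightarrow> 0" if "i < a+1" for i
  proof (rule tendsto_sandwich[of "\<lambda>_. 0" _ _ "\<lambda>k. sigma a (y k)"])
    have "y k i \<le> sigma a (y k)" for k
      unfolding sigma_def by (rule member_le_sum) (use that Lambda_nonneg[OF y_Lambda] in auto)
    then show "\<forall>\<^sub>F k in sequentially. y k i \<le> sigma a (y k)" by simp
  qed (use Lambda_nonneg[OF y_Lambda that] sigma_lim \<open>S = 0\<close> in auto)
  moreover have "t sums sigma a x"
    using summable_sums[OF t_summable] \<open>S = 0\<close> by (simp add: S_def)
  ultimately show ?thesis by (simp add: y_def t_def[abs_def])
qed

theorem corollary4p4:
  fixes a :: nat
  assumes "a \<ge> 2"
  shows "AE x in PiM {..<a+1} (\<lambda>_. lborel).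
           x \<in> Lambda (a+1) \<longrightarrow>
             ((\<forall>i<a+1. (\<lambda>k. ((T a ^^ k) x) i) \<longlonglongrightarrow> 0) \<and>
              (\<lambda>k. ((T a ^^ k) x) (a - 1)) sums sigma a x)"
  using AE_int_independent[of "a+1"]
  by (rule eventually_mono) (use T_iterates_tendsto_zero assms in auto)

end
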